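(* If $G$ is a uniformly dense (finite, simple) graph containing a cycle, then its girth satisfies $\operatorname{gir}(G)\ge\rho(G)/(\rho(G)-1)$.
   Context: For $A\subseteq E$, $c(A)$ is the number of components of $(V,A)$, $\operatorname{rank}(A)=|V|-c(A)$, $\rho(A)=|A|/\operatorname{rank}(A)$, $\rho(G)=\rho(E)$; $G$ is uniformly dense if $\rho(A)\le\rho(G)$ for all nonempty $A\subseteq E$. The girth $\operatorname{gir}(G)$ is the number of edges in a smallest cycle. *)

theory Defs
  imports Complex_Main
begin

definition simple_graph :: "'a set \<Rightarrow> 'a set set \<Rightarrow> bool" where
  "simple_graph V E \<longleftrightarrow> finite V \<and> (\<forall>e\<in>E. e \<subseteq> V \<and> card e = 2)"

definition adj :: "'a set set \<Rightarrow> 'a \<Rightarrow> 'a \<Rightarrow> bool" where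
  "adj A x y \<longleftrightarrow> {x, y} \<in> A"

definition components :: "'a set \<Rightarrow> 'a set set \<Rightarrow> 'a set set" where
  "components V A = {{y \<in> V. (adj A)\<^sup>*\<^sup>* x y} | x. x \<in> V}"

definition num_components :: "'a set \<Rightarrow> 'a set set \<Rightarrow> nat" where
  "num_components V A = card (components V A)"

definition graph_rank :: "'a set \<Rightarrow> 'a set set \<Rightarrow> nat" where
  "graph_rank V A = card V - num_components V A"

definition density :: "'a set \<Rightarrow> 'a set set \<Rightarrow> real" where
  "density V A = real (card A) / real (graph_rank V A)"

definition uniformly_dense :: "'a set \<Rightarrow> 'a set set \<Rightarrow> bool" where
  "uniformly_dense V E \<longleftrightarrow>
     (\<forall>A. A \<subseteq> E \<and> A \<noteq> {} \<longrightarrow> density V A \<le> density V E)"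

definition is_cycle :: "'a set \<Rightarrow> 'a set set \<Rightarrow> 'a list \<Rightarrow> bool" where
  "is_cycle V E vs \<longleftrightarrow> length vs \<ge> 3 \<and> distinct vs \<and> set vs \<subseteq> V \<and>
     (\<forall>i < length vs. {vs ! i, vs ! ((i + 1) mod length vs)} \<in> E)"

definition has_cycle :: "'a set \<Rightarrow> 'a set set \<Rightarrow> bool" where
  "has_cycle V E \<longleftrightarrow> (\<exists>vs. is_cycle V E vs)"

definition girth :: "'a set \<Rightarrow> 'a set set \<Rightarrow> nat" where
  "girth V E = (LEAST k. \<exists>vs. is_cycle V E vs \<and> length vs = k)"

end

theory Submission
  imports Defs
begin

text \<open>Let \<open>C\<close> be a shortest cycle, of length \<open>g = gir(G)\<close>. Its edge set spans one component
  on the \<open>g\<close> vertices of \<open>C\<close> and leaves all other vertices isolated, so it has \<open>g\<close> edges and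
  rank \<open>g - 1\<close>. Uniform density gives \<open>g / (g - 1) \<le> \<rho>(G)\<close>, and since \<open>t \<mapsto> t / (t - 1)\<close>
  is a decreasing involution of \<open>(1, \<infinity>)\<close> this is equivalent to \<open>\<rho>(G) / (\<rho>(G) - 1) \<le> g\<close>.\<close>

lemma symp_adj: "symp (adj A)"
  by (auto intro: sympI simp: adj_def insert_commute)

lemma equivp_rtranclp_adj: "equivp (adj A)\<^sup>*\<^sup>*"
  using equivp_rtranclp[OF symp_adj] .

lemma rtranclp_adj_cases:
  assumes "(adj A)\<^sup>*\<^sup>* x y"
  shows "x = y \<or> (x \<in> \<Union>A \<and> y \<in> \<Union>A)"
  using assms by (induction rule: rtranclp_induct) (auto simp: adj_def)

lemma components_single_nontrivial:
  assumes "S \<subseteq> V" "S \<noteq> {}" "\<Union>A \<subseteq> S"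
    and connected: "\<And>x y. x \<in> S \<Longrightarrow> y \<in> S \<Longrightarrow> (adj A)\<^sup>*\<^sup>* x y"
  shows "components V A = insert S ((\<lambda>x. {x}) ` (V - S))"
proof -
  define C where "C x = {y \<in> V. (adj A)\<^sup>*\<^sup>* x y}" for x
  have reach_closed: "y \<in> S" if "x \<in> S" "(adj A)\<^sup>*\<^sup>* x y" for x y
    using rtranclp_adj_cases[OF that(2)] that(1) \<open>\<Union>A \<subseteq> S\<close> by blast
  have "C x = S" if "x \<in> S" for x
  proof
    show "C x \<subseteq> S"
      using reach_closed[OF that] by (auto simp: C_def)
    show "S \<subseteq> C x"
      using connected[OF that] \<open>S \<subseteq> V\<close> by (auto simp: C_def)
  qed
  then have "C ` S = {S}"
    using \<open>S \<noteq> {}\<close> by auto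
  moreover have "C x = {x}" if "x \<in> V - S" for x
  proof -
    have "y = x" if "(adj A)\<^sup>*\<^sup>* x y" for y
      using rtranclp_adj_cases[OF that] \<open>x \<in> V - S\<close> \<open>\<Union>A \<subseteq> S\<close> by blast
    then show ?thesis
      using \<open>x \<in> V - S\<close> by (auto simp: C_def)
  qed
  then have "C ` (V - S) = (\<lambda>x. {x}) ` (V - S)"
    by auto
  moreover have "C ` V = C ` S \<union> C ` (V - S)"
    using \<open>S \<subseteq> V\<close> by blast
  moreover have "components V A = C ` V"
    unfolding components_def C_def by blast
  ultimately show ?thesis
    by simp
qed

lemma graph_rank_single_nontrivial:
  assumes "finite V" "S \<subseteq> V" "S \<noteq> {}" "\<Union>A \<subseteq> S"
    and "\<And>x y. x \<in> S \<Longrightarrow> y \<in> S \<Longrightarrow> (adj A)\<^sup>*\<^sup>* x y"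
  shows "graph_rank V A = card S - 1"
proof -
  have "finite S"
    using assms(1,2) finite_subset by blast
  then have "S \<notin> (\<lambda>x. {x}) ` (V - S)"
    using \<open>S \<noteq> {}\<close> by auto
  then have "num_components V A = card (V - S) + 1"
    using assms by (simp add: num_components_def components_single_nontrivial card_image)
  moreover have "card (V - S) = card V - card S" "card S \<le> card V"
    using assms(1,2) \<open>finite S\<close> by (auto simp: card_Diff_subset card_mono)
  ultimately show ?thesis
    unfolding graph_rank_def by simp
qed

definition cycle_edges :: "'a list \<Rightarrow> 'a set set" where
  "cycle_edges vs = (\<lambda>i. {vs ! i, vs ! ((i + 1) mod length vs)}) ` {..<length vs}"

lemma cycle_edges_subset: "is_cycle V E vs \<Longrightarrow> cycle_edges vs \<subseteq> E"
  by (auto simp: is_cycle_def cycle_edges_def)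

lemma Union_cycle_edges: "\<Union> (cycle_edges vs) \<subseteq> set vs"
  by (auto simp: cycle_edges_def intro!: nth_mem mod_less_divisor)

lemma mod_successor_involutive_imp_le_2:
  fixes i j g :: nat
  assumes "i < g" "i = (j + 1) mod g" "j = (i + 1) mod g"
  shows "g \<le> 2"
proof -
  have "(i + 2) mod g = ((i + 1) mod g + 1) mod g"
    by (simp add: mod_Suc_eq)
  also have "\<dots> = (j + 1) mod g"
    using assms(3) by simp
  also have "\<dots> = i mod g"
    using assms(1,2) by simp
  finally have "g dvd 2"
    using mod_eq_dvd_iff_nat[of i "i + 2" g] by simp
  then show ?thesis
    by (simp add: dvd_imp_le)
qed

lemma card_cycle_edges:
  assumes "distinct vs" "length vs \<ge> 3"
  shows "card (cycle_edges vs) = length vs"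
proof -
  let ?g = "length vs"
  have "inj_on (\<lambda>i. {vs ! i, vs ! ((i + 1) mod ?g)}) {..<?g}"
  proof (rule inj_onI)
    fix i j
    assume i: "i \<in> {..<?g}" and j: "j \<in> {..<?g}"
      and eq: "{vs ! i, vs ! ((i + 1) mod ?g)} = {vs ! j, vs ! ((j + 1) mod ?g)}"
    have "(i + 1) mod ?g < ?g" "(j + 1) mod ?g < ?g"
      using i by (auto intro!: mod_less_divisor)
    with eq have "i = j \<or> (i = (j + 1) mod ?g \<and> j = (i + 1) mod ?g)"
      using i j \<open>distinct vs\<close> by (auto simp: doubleton_eq_iff nth_eq_iff_index_eq)
    then show "i = j"
      using mod_successor_involutive_imp_le_2 i \<open>length vs \<ge> 3\<close> by fastforce
  qed
  then show ?thesis
    by (simp add: cycle_edges_def card_image)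
qed

lemma cycle_edges_connected:
  assumes "x \<in> set vs" "y \<in> set vs"
  shows "(adj (cycle_edges vs))\<^sup>*\<^sup>* x y"
proof -
  have from_first: "(adj (cycle_edges vs))\<^sup>*\<^sup>* (vs ! 0) (vs ! i)" if "i < length vs" for i
    using that
  proof (induction i)
    case 0
    then show ?case by simp
  next
    case (Suc k)
    then have "adj (cycle_edges vs) (vs ! k) (vs ! Suc k)"
      by (force simp: adj_def cycle_edges_def)
    with Suc show ?case
      by (meson Suc_lessD rtranclp.rtrancl_into_rtrancl)
  qed
  obtain i j where "i < length vs" "j < length vs" "x = vs ! i" "y = vs ! j"
    using assms by (metis in_set_conv_nth)
  then show ?thesis
    using from_first equivp_rtranclp_adj
    by (metis equivp_symp equivp_transp)
qed

lemma density_cycle_edges: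
  assumes "finite V" "is_cycle V E vs"
  shows "density V (cycle_edges vs) = real (length vs) / (real (length vs) - 1)"
proof -
  have "length vs \<ge> 3" "distinct vs" "set vs \<subseteq> V"
    using assms(2) by (auto simp: is_cycle_def)
  moreover have "set vs \<noteq> {}"
    using \<open>length vs \<ge> 3\<close> by auto
  ultimately have "graph_rank V (cycle_edges vs) = length vs - 1"
    using graph_rank_single_nontrivial[OF assms(1) _ _ Union_cycle_edges cycle_edges_connected]
    by (simp add: distinct_card)
  then show ?thesis
    using \<open>length vs \<ge> 3\<close> \<open>distinct vs\<close> by (simp add: density_def card_cycle_edges of_nat_diff)
qed

lemma girth_attained:
  assumes "has_cycle V E"
  obtains vs where "is_cycle V E vs" "length vs = girth V E"
proof -
  have "\<exists>k vs. is_cycle V E vs \<and> length vs = k"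
    using assms by (auto simp: has_cycle_def)
  from LeastI_ex[OF this] show ?thesis
    using that unfolding girth_def by blast
qed

lemma divide_pred_le_swap:
  fixes x r :: real
  assumes "x > 1" "x / (x - 1) \<le> r"
  shows "r / (r - 1) \<le> x"
proof -
  have "x / (x - 1) > 1"
    using assms(1) by (simp add: less_divide_eq)
  then have "r - 1 > 0"
    using assms(2) by linarith
  have "x \<le> r * (x - 1)"
    using assms by (simp add: pos_divide_le_eq)
  then have "r \<le> x * (r - 1)"
    by (simp add: algebra_simps)
  then show ?thesis
    using \<open>r - 1 > 0\<close> by (simp add: pos_divide_le_eq)
qed

theorem proposition3p8:
  fixes V :: "'a set" and E :: "'a set set"
  assumes "simple_graph V E"
    and "uniformly_dense V E"
    and "has_cycle V E"
  shows "real (girth V E) \<ge> density V E / (density V E - 1)"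
proof -
  obtain vs where cycle: "is_cycle V E vs" and length: "length vs = girth V E"
    using girth_attained[OF assms(3)] .
  have "finite V"
    using assms(1) by (simp add: simple_graph_def)
  have "cycle_edges vs \<noteq> {}"
    using cycle by (auto simp: is_cycle_def cycle_edges_def lessThan_empty_iff)
  then have "density V (cycle_edges vs) \<le> density V E"
    using assms(2) cycle_edges_subset[OF cycle] by (simp add: uniformly_dense_def)
  then have "real (length vs) / (real (length vs) - 1) \<le> density V E"
    using density_cycle_edges[OF \<open>finite V\<close> cycle] by simp
  moreover have "real (length vs) > 1"
    using cycle by (simp add: is_cycle_def)
  ultimately show ?thesis
    using divide_pred_le_swap length by fastforce
qed

end
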